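(* Let $f:\mathbb{R}^d\to\mathbb{R}$ be $\beta$-smooth with minimum value $f^\star$, let $\alpha>0$, $\delta\in(0,\tfrac12)$, and run $T$ steps of SGD $w_{t+1}=w_t-\eta g_t$ (arbitrary $w_1$, $g_t$ a fresh answer of a stochastic gradient oracle with bounded affine noise with parameters $\sigma_0,\sigma_1\ge0$ at $w_t$) with the fixed step size $$\eta=\min\Big\{\frac{1}{4\beta(1+\sigma_1^2\log\frac T\delta)},\ \frac{\alpha}{\sigma_0\sqrt T}\Big\}.$$ Then with probability at least $1-2\delta$: (i) $\displaystyle\frac1T\sum_{t=1}^T\|\nabla f(w_t)\|^2\le\Big(\beta\alpha+\frac{\Delta_1}\alpha\Big)\frac{2\sigma_0}{\sqrt T}+\Big(8\beta\Delta_1(1+4\sigma_1^2)\log\tfrac T\delta+24\sigma_1^2\beta^2\alpha^2\log\tfrac1\delta+15\sigma_0^2\log\tfrac1\delta\Big)\frac1T$; (ii) $f(w_t)-f^\star\le F$ for all $1\le t\le T+1$, where $\Delta_1=f(w_1)-f^\star$ and $$F=2\Delta_1+2\beta\alpha^2+3\min\Big\{\frac{\sigma_0^2}{4\beta(1+\sigma_1^2\log\frac T\delta)},\ \frac{\sigma_0\alpha}{\sqrt T}\Big\}\log\tfrac T\delta.$$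
   Context: $\|\cdot\|$ is the Euclidean norm and $\log$ the base-2 logarithm. $\beta$-smooth: $\|\nabla f(x)-\nabla f(y)\|\le\beta\|x-y\|$; $f$ attains its minimum $f^\star$. Oracle: queried at $w$, returns random $g(w)$ with $\mathbb{E}[g(w)\mid w]=\nabla f(w)$ and, with probability one, $\|g(w)-\nabla f(w)\|^2\le\sigma_0^2+\sigma_1^2\|\nabla f(w)\|^2$; in particular $\mathbb{E}[g_t\mid g_1,\dots,g_{t-1}]=\nabla f(w_t)$. *)

theory Defs
  imports "HOL-Probability.Probability"
begin

text \<open>Sigma-algebra generated by the oracle answers g 1, ..., g (t-1)
  (the history before step t). For t = 1 this is the trivial algebra.\<close>
definition hist_alg :: "'m measure \<Rightarrow> (nat \<Rightarrow> 'm \<Rightarrow> 'a::euclidean_space) \<Rightarrow> nat \<Rightarrow> 'm measure" where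
  "hist_alg M g t = vimage_algebra (space M) (\<lambda>\<omega>. \<lambda>i\<in>{1..<t}. g i \<omega>) (PiM {1..<t} (\<lambda>_. borel))"

text \<open>Step size of the theorem. When sigma0 = 0 the second term is +infinity,
  so the minimum is the first term.\<close>
definition sgd_eta :: "real \<Rightarrow> real \<Rightarrow> real \<Rightarrow> real \<Rightarrow> real \<Rightarrow> nat \<Rightarrow> real" where
  "sgd_eta \<beta> \<sigma>0 \<sigma>1 \<alpha> \<delta> T =
     (if \<sigma>0 = 0 then 1 / (4 * \<beta> * (1 + \<sigma>1\<^sup>2 * log 2 (real T / \<delta>)))
      else min (1 / (4 * \<beta> * (1 + \<sigma>1\<^sup>2 * log 2 (real T / \<delta>)))) (\<alpha> / (\<sigma>0 * sqrt (real T))))"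

end

theory Submission
  imports Defs
begin

(* Smoothness turns one SGD step into the descent inequality
     gap (t+1) <= gap t - 7 eta/8 |grad t|^2 + M t + beta eta^2 sigma0^2 / 2,
   where M t = - eta (1 - beta eta) <grad t, noise t> is a martingale difference.  While the gap
   stays below F, the gradient and hence M t are bounded, and a Freedman-type inequality shows
   that, with probability 1 - delta/T for each horizon, sum M is at most 7 eta/8 sum |grad|^2 plus
   a logarithmic term: exp (theta * sum M - theta^2/2 * sum c t^2) is a supermartingale, where
   the conditional range c t of M t satisfies c t^2 = eta^2 K |grad t|^2 with
   K = sigma0^2 + 2 beta F sigma1^2.  Fed back into the telescoped descent inequality, this shows
   by induction on the horizon that the gap never exceeds F, which is (ii); one more concentration
   event, with constant 3 eta/8 at horizon T, then gives (i). *)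

section \<open>Smooth functions\<close>

lemma lipschitz_gradient_descent:
  fixes f :: "'a::real_inner \<Rightarrow> real"
  assumes grad: "\<And>x. (f has_derivative (\<lambda>h. f' x \<bullet> h)) (at x)"
    and lip: "\<And>x y. norm (f' x - f' y) \<le> \<beta> * norm (x - y)"
  shows "f y \<le> f x + f' x \<bullet> (y - x) + \<beta> / 2 * (norm (y - x))\<^sup>2"
proof -
  define d where "d = y - x"
  define \<psi> where "\<psi> s = f (x + s *\<^sub>R d) - s * (f' x \<bullet> d) - \<beta> / 2 * s\<^sup>2 * (norm d)\<^sup>2" for s
  have \<psi>_deriv: "(\<psi> has_real_derivative ((f' (x + s *\<^sub>R d) - f' x) \<bullet> d - \<beta> * s * (norm d)\<^sup>2)) (at s)"
    for s
  proof -
    have "((\<lambda>s. f (x + s *\<^sub>R d)) has_derivative (\<lambda>h. f' (x + s *\<^sub>R d) \<bullet> (h *\<^sub>R d))) (at s)"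
      by (rule has_derivative_compose[OF _ grad]) (auto intro!: derivative_eq_intros)
    then have "((\<lambda>s. f (x + s *\<^sub>R d)) has_real_derivative (f' (x + s *\<^sub>R d) \<bullet> d)) (at s)"
      by (simp add: has_field_derivative_def mult_commute_abs)
    then show ?thesis unfolding \<psi>_def
      by (auto intro!: derivative_eq_intros simp: power2_eq_square inner_diff_left algebra_simps)
  qed
  have "\<psi> 1 \<le> \<psi> 0"
  proof (rule DERIV_nonpos_imp_nonincreasing[of 0 1 \<psi>])
    fix s :: real assume s: "0 \<le> s" "s \<le> 1"
    have "(f' (x + s *\<^sub>R d) - f' x) \<bullet> d \<le> norm (f' (x + s *\<^sub>R d) - f' x) * norm d"
      by (rule norm_cauchy_schwarz)
    also have "\<dots> \<le> \<beta> * norm (s *\<^sub>R d) * norm d"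
      using lip[of "x + s *\<^sub>R d" x] by (intro mult_right_mono) auto
    also have "\<dots> = \<beta> * s * (norm d)\<^sup>2"
      using s by (simp add: power2_eq_square)
    finally show "\<exists>y. (\<psi> has_real_derivative y) (at s) \<and> y \<le> 0"
      using \<psi>_deriv[of s] by (intro exI[of _ "(f' (x + s *\<^sub>R d) - f' x) \<bullet> d - \<beta> * s * (norm d)\<^sup>2"]) auto
  qed simp
  then show ?thesis by (simp add: \<psi>_def d_def)
qed

lemma lipschitz_gradient_norm_sq_le:
  fixes f :: "'a::real_inner \<Rightarrow> real"
  assumes grad: "\<And>x. (f has_derivative (\<lambda>h. f' x \<bullet> h)) (at x)"
    and lip: "\<And>x y. norm (f' x - f' y) \<le> \<beta> * norm (x - y)" and "\<beta> > 0"
    and min_le: "\<And>x. fstar \<le> f x"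
  shows "(norm (f' x))\<^sup>2 \<le> 2 * \<beta> * (f x - fstar)"
proof -
  define y where "y = x - (1 / \<beta>) *\<^sub>R f' x"
  have "fstar \<le> f y" by (rule min_le)
  also have "f y \<le> f x + f' x \<bullet> (y - x) + \<beta> / 2 * (norm (y - x))\<^sup>2"
    by (rule lipschitz_gradient_descent[OF grad lip])
  also have "\<dots> = f x - (norm (f' x))\<^sup>2 / (2 * \<beta>)"
    using \<open>\<beta> > 0\<close> by (simp add: y_def power2_eq_square field_simps flip: power2_norm_eq_inner)
  finally show ?thesis
    using \<open>\<beta> > 0\<close> by (simp add: field_simps)
qed

section \<open>Exponential inequalities\<close>

lemma exp_le_cosh_plus_sinh:
  fixes x c l :: real
  assumes "\<bar>x\<bar> \<le> c" "0 < c" "0 \<le> l"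
  shows "exp (l * x) \<le> cosh (l * c) + x / c * sinh (l * c)"
proof -
  define t where "t = (c + x) / (2 * c)"
  have t: "0 \<le> t" "t \<le> 1" using assms by (auto simp: t_def field_simps)
  have "exp (l * ((1 - t) * (-c) + t * c)) \<le> (1 - t) * exp (l * (-c)) + t * exp (l * c)"
    using convex_onD[OF convex_on_exp[OF assms(3)], of t "-c" c] t by auto
  moreover have "(1 - t) * (-c) + t * c = x"
    using assms by (simp add: t_def field_simps)
  moreover have "(1 - t) * exp (l * (-c)) + t * exp (l * c) = cosh (l * c) + x / c * sinh (l * c)"
    using assms by (simp add: t_def cosh_def sinh_def field_simps)
  ultimately show ?thesis by simp
qed

lemma cosh_le_exp_half_square:
  fixes y :: real
  assumes "0 \<le> y"
  shows "cosh y \<le> exp (y\<^sup>2 / 2)"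
proof -
  have "-(2 * y) * (1 / 2) + ln (1 + (1 / 2) * (exp (2 * y) - 1)) \<le> (2 * y)\<^sup>2 / 8"
    using Hoeffdings_lemma_aux[of "2 * y" "1 / 2"] assms by simp
  moreover have "1 + (1 / 2) * (exp (2 * y) - 1) = exp y * cosh y"
    by (simp add: cosh_def field_simps flip: exp_add exp_minus)
  moreover have "cosh y > 0" by (simp add: cosh_def add_pos_pos)
  ultimately have "ln (cosh y) \<le> y\<^sup>2 / 2"
    by (simp add: ln_mult power2_eq_square)
  then show ?thesis
    by (metis \<open>cosh y > 0\<close> exp_le_cancel_iff exp_ln)
qed

lemma sinh_le_mult_exp:
  fixes y :: real
  assumes "0 \<le> y"
  shows "sinh y \<le> y * exp y"
proof -
  have "exp y * (1 - 2 * y) \<le> exp y * exp (-2 * y)"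
    using exp_ge_add_one_self[of "-2 * y"] by (intro mult_left_mono) auto
  also have "exp y * exp (-2 * y) = exp (-y)" by (simp flip: exp_add)
  finally show ?thesis by (simp add: sinh_def algebra_simps)
qed

lemma ln_le_log2: "1 \<le> x \<Longrightarrow> ln x \<le> log 2 x"
  using ln_2_less_1 ln_ge_zero[of x] mult_left_le[of "ln 2" "ln x"] by (simp add: log_def le_divide_eq)

lemma sinh_measurable[measurable]: "(sinh :: real \<Rightarrow> real) \<in> borel_measurable borel"
  by (intro borel_measurable_continuous_onI continuous_intros)

section \<open>Conditionally centred increments\<close>

lemma integral_inner_cond_exp_centered:
  fixes V U X :: "'m \<Rightarrow> 'a::euclidean_space"
  assumes "finite_measure M" "sigma_finite_subalgebra M F"
    and V: "V \<in> borel_measurable F" and U: "U \<in> borel_measurable F"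
    and X: "X \<in> borel_measurable M"
    and cond_exp: "\<And>b. b \<in> Basis \<Longrightarrow>
      AE \<omega> in M. real_cond_exp M F (\<lambda>\<omega>. X \<omega> \<bullet> b) \<omega> = U \<omega> \<bullet> b"
    and bounded_X: "AE \<omega> in M. norm (V \<omega>) * norm (X \<omega>) \<le> C"
    and bounded_U: "AE \<omega> in M. norm (V \<omega>) * norm (U \<omega>) \<le> C"
  shows "(\<integral>\<omega>. V \<omega> \<bullet> (X \<omega> - U \<omega>) \<partial>M) = 0"
proof -
  interpret finite_measure M by fact
  interpret sigma_finite_subalgebra M F by fact
  have [measurable]: "V \<in> borel_measurable M" "U \<in> borel_measurable M" "X \<in> borel_measurable M"
    using V U X by (simp_all add: measurable_from_subalg[OF subalg])
  have integrable_component: "integrable M (\<lambda>\<omega>. (V \<omega> \<bullet> b) * (Y \<omega> \<bullet> b))"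
    if "b \<in> Basis" "Y \<in> borel_measurable M" "AE \<omega> in M. norm (V \<omega>) * norm (Y \<omega>) \<le> C" for b Y
  proof (rule integrable_const_bound[where B = C])
    show "AE \<omega> in M. norm ((V \<omega> \<bullet> b) * (Y \<omega> \<bullet> b)) \<le> C"
      using that(3)
    proof eventually_elim
      case (elim \<omega>)
      have "\<bar>V \<omega> \<bullet> b\<bar> * \<bar>Y \<omega> \<bullet> b\<bar> \<le> norm (V \<omega>) * norm (Y \<omega>)"
        using Basis_le_norm[OF \<open>b \<in> Basis\<close>] by (intro mult_mono) auto
      with elim show ?case by (simp add: abs_mult)
    qed
  qed (use that in measurable)
  have component_eq: "(\<integral>\<omega>. (V \<omega> \<bullet> b) * (X \<omega> \<bullet> b) \<partial>M) = (\<integral>\<omega>. (V \<omega> \<bullet> b) * (U \<omega> \<bullet> b) \<partial>M)"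
    if b: "b \<in> Basis" for b
  proof -
    have "(\<integral>\<omega>. (V \<omega> \<bullet> b) * (X \<omega> \<bullet> b) \<partial>M)
        = (\<integral>\<omega>. (V \<omega> \<bullet> b) * real_cond_exp M F (\<lambda>\<omega>. X \<omega> \<bullet> b) \<omega> \<partial>M)"
      by (rule real_cond_exp_intg(2)[symmetric])
        (use integrable_component[OF b X bounded_X] V in measurable)
    also have "\<dots> = (\<integral>\<omega>. (V \<omega> \<bullet> b) * (U \<omega> \<bullet> b) \<partial>M)"
      using cond_exp[OF b] by (intro integral_cong_AE) auto
    finally show ?thesis .
  qed
  have "V \<omega> \<bullet> (X \<omega> - U \<omega>) = (\<Sum>b\<in>Basis. (V \<omega> \<bullet> b) * (X \<omega> \<bullet> b) - (V \<omega> \<bullet> b) * (U \<omega> \<bullet> b))"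
    for \<omega>
    by (subst euclidean_inner) (simp add: inner_diff_left right_diff_distrib)
  then have "(\<integral>\<omega>. V \<omega> \<bullet> (X \<omega> - U \<omega>) \<partial>M)
      = (\<integral>\<omega>. (\<Sum>b\<in>Basis. (V \<omega> \<bullet> b) * (X \<omega> \<bullet> b) - (V \<omega> \<bullet> b) * (U \<omega> \<bullet> b)) \<partial>M)"
    by simp
  also have "\<dots> = (\<Sum>b\<in>Basis. (\<integral>\<omega>. (V \<omega> \<bullet> b) * (X \<omega> \<bullet> b) \<partial>M) - (\<integral>\<omega>. (V \<omega> \<bullet> b) * (U \<omega> \<bullet> b) \<partial>M))"
    using integrable_component[OF _ X bounded_X] integrable_component[OF _ _ bounded_U]
    by (simp add: Bochner_Integration.integral_sum)
  also have "\<dots> = 0"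
    by (simp add: component_eq)
  finally show ?thesis .
qed

section \<open>The SGD run and its constants\<close>

locale sgd_setting =
  fixes M :: "'m measure"
    and f :: "'a::euclidean_space \<Rightarrow> real" and f' :: "'a \<Rightarrow> 'a"
    and fstar \<beta> \<alpha> \<delta> \<sigma>0 \<sigma>1 :: real and T :: nat
    and w1 :: 'a and w g :: "nat \<Rightarrow> 'm \<Rightarrow> 'a"
  assumes M_prob_space: "prob_space M"
    and f_deriv: "\<And>x. (f has_derivative (\<lambda>h. f' x \<bullet> h)) (at x)"
    and \<beta>_pos: "\<beta> > 0"
    and smooth: "\<And>x y. norm (f' x - f' y) \<le> \<beta> * norm (x - y)"
    and min_le: "\<And>x. fstar \<le> f x"
    and \<alpha>_pos: "\<alpha> > 0" and \<delta>_pos: "0 < \<delta>" and \<delta>_less: "\<delta> < 1/2" and T_pos: "T \<ge> 1"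
    and \<sigma>0_nonneg: "\<sigma>0 \<ge> 0" and \<sigma>1_nonneg: "\<sigma>1 \<ge> 0"
    and init: "\<And>\<omega>. w 1 \<omega> = w1"
    and step: "\<And>t \<omega>. t \<ge> 1 \<Longrightarrow>
                 w (Suc t) \<omega> = w t \<omega> - sgd_eta \<beta> \<sigma>0 \<sigma>1 \<alpha> \<delta> T *\<^sub>R g t \<omega>"
    and g_measurable: "\<And>t. g t \<in> borel_measurable M"
    and unbiased: "\<And>t b. 1 \<le> t \<Longrightarrow> t \<le> T \<Longrightarrow> b \<in> Basis \<Longrightarrow>
        AE \<omega> in M. real_cond_exp M (hist_alg M g t) (\<lambda>\<omega>. g t \<omega> \<bullet> b) \<omega> = f' (w t \<omega>) \<bullet> b"
    and noise: "\<And>t. 1 \<le> t \<Longrightarrow> t \<le> T \<Longrightarrow>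
        AE \<omega> in M. (norm (g t \<omega> - f' (w t \<omega>)))\<^sup>2 \<le> \<sigma>0\<^sup>2 + \<sigma>1\<^sup>2 * (norm (f' (w t \<omega>)))\<^sup>2"
begin

sublocale prob_space M by (rule M_prob_space)

text \<open>\<open>1 / \<eta>1_inv\<close> and \<open>\<alpha> / (\<sigma>0 * sqrt T)\<close> are the two candidates in the minimum defining
  the step size, \<open>gap_bound\<close> is the bound \<open>F\<close> of (ii), and \<open>var_proxy\<close> bounds the squared norm
  of the noise as long as the gap stays below \<open>F\<close>.\<close>

definition \<eta> :: real where
  "\<eta> = sgd_eta \<beta> \<sigma>0 \<sigma>1 \<alpha> \<delta> T"

definition log_T :: real where
  "log_T = log 2 (real T / \<delta>)"

definition log_\<delta> :: real where
  "log_\<delta> = log 2 (1 / \<delta>)"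

definition \<eta>1_inv :: real where
  "\<eta>1_inv = 4 * \<beta> * (1 + \<sigma>1\<^sup>2 * log_T)"

definition noise_scale :: real where
  "noise_scale = min (\<sigma>0\<^sup>2 / \<eta>1_inv) (\<sigma>0 * \<alpha> / sqrt (real T))"

definition \<Delta>1 :: real where
  "\<Delta>1 = f w1 - fstar"

definition gap_bound :: real where
  "gap_bound = 2 * \<Delta>1 + 2 * \<beta> * \<alpha>\<^sup>2 + 3 * noise_scale * log_T"

definition var_proxy :: real where
  "var_proxy = \<sigma>0\<^sup>2 + \<sigma>1\<^sup>2 * (2 * \<beta> * gap_bound)"

lemma \<Delta>1_nonneg: "\<Delta>1 \<ge> 0"
  using min_le[of w1] by (simp add: \<Delta>1_def)

lemma log_\<delta>_nonneg: "log_\<delta> \<ge> 0"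
  using \<delta>_pos \<delta>_less by (simp add: log_\<delta>_def)

lemma log_\<delta>_le_log_T: "log_\<delta> \<le> log_T"
  unfolding log_\<delta>_def log_T_def using T_pos \<delta>_pos
  by (subst log_le_cancel_iff) (auto intro: divide_right_mono)

lemma one_le_log_T: "1 \<le> log_T"
proof -
  have "2 \<le> real T / \<delta>"
    using T_pos \<delta>_pos \<delta>_less by (simp add: field_simps)
  then show ?thesis
    unfolding log_T_def by (subst le_log_iff) auto
qed

lemma ln_le_log_T: "ln (real T / \<delta>) \<le> log_T"
  unfolding log_T_def using T_pos \<delta>_pos \<delta>_less by (intro ln_le_log2) (simp add: field_simps)

lemma ln_le_log_\<delta>: "ln (1 / \<delta>) \<le> log_\<delta>"
  unfolding log_\<delta>_def using \<delta>_pos \<delta>_less by (intro ln_le_log2) simp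

lemma \<eta>1_inv_pos: "\<eta>1_inv > 0"
  unfolding \<eta>1_inv_def using \<beta>_pos one_le_log_T by (intro mult_pos_pos add_pos_nonneg) auto

lemma \<eta>_cases: "\<eta> = 1 / \<eta>1_inv \<or> (\<sigma>0 > 0 \<and> \<eta> = \<alpha> / (\<sigma>0 * sqrt (real T)))"
  using \<sigma>0_nonneg
  by (auto simp: \<eta>_def sgd_eta_def \<eta>1_inv_def log_T_def min_def)

lemma \<eta>_le_inverse_\<eta>1_inv: "\<eta> \<le> 1 / \<eta>1_inv"
  by (simp add: \<eta>_def sgd_eta_def \<eta>1_inv_def log_T_def)

lemma \<eta>_le_noise_term: "\<sigma>0 > 0 \<Longrightarrow> \<eta> \<le> \<alpha> / (\<sigma>0 * sqrt (real T))"
  by (simp add: \<eta>_def sgd_eta_def)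

lemma \<eta>_pos: "\<eta> > 0"
  using \<eta>_cases \<eta>1_inv_pos \<alpha>_pos T_pos by auto

lemma inverse_\<eta>_le: "1 / \<eta> \<le> \<eta>1_inv + \<sigma>0 * sqrt (real T) / \<alpha>"
  using \<eta>_cases \<eta>1_inv_pos \<sigma>0_nonneg \<alpha>_pos by auto

lemma \<eta>_\<sigma>0_sq_le_noise_scale: "\<eta> * \<sigma>0\<^sup>2 \<le> noise_scale"
proof (cases "\<sigma>0 = 0")
  case True
  then show ?thesis unfolding noise_scale_def by simp
next
  case False
  then have "\<sigma>0 > 0" using \<sigma>0_nonneg by simp
  have "\<eta> * \<sigma>0\<^sup>2 \<le> \<sigma>0\<^sup>2 / \<eta>1_inv"
    using mult_right_mono[OF \<eta>_le_inverse_\<eta>1_inv, of "\<sigma>0\<^sup>2"] by simp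
  moreover have "\<eta> * \<sigma>0\<^sup>2 \<le> \<alpha> / (\<sigma>0 * sqrt (real T)) * \<sigma>0\<^sup>2"
    using \<eta>_le_noise_term[OF \<open>\<sigma>0 > 0\<close>] by (intro mult_right_mono) auto
  ultimately show ?thesis
    using \<open>\<sigma>0 > 0\<close> by (simp add: noise_scale_def power2_eq_square mult.commute)
qed

lemma \<eta>_sq_\<sigma>0_sq_T_le: "\<eta>\<^sup>2 * \<sigma>0\<^sup>2 * real T \<le> \<alpha>\<^sup>2"
proof (cases "\<sigma>0 = 0")
  case True
  then show ?thesis by simp
next
  case False
  then have "\<sigma>0 > 0" using \<sigma>0_nonneg by simp
  have "\<eta> * (\<sigma>0 * sqrt (real T)) \<le> \<alpha>"
    using \<eta>_le_noise_term[OF \<open>\<sigma>0 > 0\<close>] \<open>\<sigma>0 > 0\<close> T_pos by (simp add: field_simps)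
  then have "(\<eta> * (\<sigma>0 * sqrt (real T)))\<^sup>2 \<le> \<alpha>\<^sup>2"
    using \<eta>_pos \<open>\<sigma>0 > 0\<close> by (intro power_mono) auto
  then show ?thesis by (simp add: power_mult_distrib)
qed

lemma \<beta>_\<eta>_mult_le: "\<beta> * \<eta> * (1 + \<sigma>1\<^sup>2 * log_T) \<le> 1 / 4"
proof -
  have "\<beta> * \<eta> * (1 + \<sigma>1\<^sup>2 * log_T) \<le> \<beta> * (1 / \<eta>1_inv) * (1 + \<sigma>1\<^sup>2 * log_T)"
    using \<eta>_le_inverse_\<eta>1_inv \<beta>_pos one_le_log_T
    by (intro mult_right_mono mult_left_mono) auto
  also have "\<dots> = 1 / 4"
    using \<beta>_pos one_le_log_T add_pos_nonneg[of 1 "\<sigma>1\<^sup>2 * log_T"] by (simp add: \<eta>1_inv_def)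
  finally show ?thesis .
qed

lemma \<beta>_\<eta>_\<sigma>1_le: "\<beta> * \<eta> * (1 + \<sigma>1\<^sup>2) \<le> 1 / 4"
proof -
  have "1 + \<sigma>1\<^sup>2 \<le> 1 + \<sigma>1\<^sup>2 * log_T"
    using mult_left_mono[OF one_le_log_T, of "\<sigma>1\<^sup>2"] by simp
  then show ?thesis
    using \<beta>_\<eta>_mult_le \<beta>_pos \<eta>_pos
    by (meson mult_left_mono order_trans mult_nonneg_nonneg less_imp_le)
qed

lemma \<beta>_\<eta>_\<sigma>1_log_T_le: "\<beta> * \<eta> * \<sigma>1\<^sup>2 * log_T \<le> 1 / 4"
proof -
  have "\<beta> * \<eta> * \<sigma>1\<^sup>2 * log_T \<le> \<beta> * \<eta> * (1 + \<sigma>1\<^sup>2 * log_T)"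
    using \<beta>_pos \<eta>_pos by (simp add: algebra_simps)
  with \<beta>_\<eta>_mult_le show ?thesis by linarith
qed

lemma \<beta>_\<eta>_le: "\<beta> * \<eta> \<le> 1 / 4"
proof -
  have "\<beta> * \<eta> \<le> \<beta> * \<eta> * (1 + \<sigma>1\<^sup>2)"
    using \<beta>_pos \<eta>_pos by (simp add: algebra_simps)
  with \<beta>_\<eta>_\<sigma>1_le show ?thesis by linarith
qed

lemma noise_scale_nonneg: "noise_scale \<ge> 0"
  unfolding noise_scale_def using \<eta>1_inv_pos \<alpha>_pos \<sigma>0_nonneg by simp

lemma gap_bound_pos: "gap_bound > 0"
proof -
  have "0 < \<beta> * \<alpha>\<^sup>2" "0 \<le> noise_scale * log_T"
    using \<beta>_pos \<alpha>_pos noise_scale_nonneg one_le_log_T by auto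
  then show ?thesis
    unfolding gap_bound_def using \<Delta>1_nonneg by linarith
qed

lemma var_proxy_nonneg: "var_proxy \<ge> 0"
  unfolding var_proxy_def using gap_bound_pos \<beta>_pos by simp

section \<open>The stopped noise process\<close>

definition hist :: "nat \<Rightarrow> 'm measure" where
  "hist t = hist_alg M g t"

definition gap :: "nat \<Rightarrow> 'm \<Rightarrow> real" where
  "gap t \<omega> = f (w t \<omega>) - fstar"

definition grad :: "nat \<Rightarrow> 'm \<Rightarrow> 'a" where
  "grad t \<omega> = f' (w t \<omega>)"

definition noise :: "nat \<Rightarrow> 'm \<Rightarrow> 'a" where
  "noise t \<omega> = g t \<omega> - grad t \<omega>"

definition noise_ok :: "'m \<Rightarrow> bool" where
  "noise_ok \<omega> \<longleftrightarrow> (\<forall>t\<in>{1..T}. (norm (noise t \<omega>))\<^sup>2 \<le> \<sigma>0\<^sup>2 + \<sigma>1\<^sup>2 * (norm (grad t \<omega>))\<^sup>2)"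

text \<open>The noise term of the descent inequality is stopped once the gap has exceeded
  \<open>gap_bound\<close>; before that time \<open>\<parallel>grad t\<parallel>\<^sup>2 \<le> 2 \<beta> gap_bound\<close>, so the stopped increments are
  bounded, and on the good event nothing is ever stopped.\<close>

definition active :: "nat \<Rightarrow> 'm \<Rightarrow> bool" where
  "active t \<omega> \<longleftrightarrow> (\<forall>s\<in>{1..t}. gap s \<omega> \<le> gap_bound)"

definition mart_inc :: "nat \<Rightarrow> 'm \<Rightarrow> real" where
  "mart_inc t \<omega> = - (\<eta> * (1 - \<beta> * \<eta>)) * (grad t \<omega> \<bullet> noise t \<omega>)"

definition inc :: "nat \<Rightarrow> 'm \<Rightarrow> real" where
  "inc t \<omega> = (if active t \<omega> then mart_inc t \<omega> else 0)"

definition grad_sq_stopped :: "nat \<Rightarrow> 'm \<Rightarrow> real" where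
  "grad_sq_stopped t \<omega> = (if active t \<omega> then (norm (grad t \<omega>))\<^sup>2 else 0)"

definition inc_scale :: "nat \<Rightarrow> 'm \<Rightarrow> real" where
  "inc_scale t \<omega> = \<eta> * sqrt (var_proxy * grad_sq_stopped t \<omega>)"

definition mg_exponent :: "real \<Rightarrow> nat \<Rightarrow> 'm \<Rightarrow> real" where
  "mg_exponent \<theta> n \<omega> = (\<Sum>t\<in>{1..<n}. \<theta> * inc t \<omega> - \<theta>\<^sup>2 / 2 * (inc_scale t \<omega>)\<^sup>2)"

definition excess_event :: "real \<Rightarrow> real \<Rightarrow> nat \<Rightarrow> 'm set" where
  "excess_event c x n =
    {\<omega> \<in> space M. c * (\<Sum>t\<in>{1..<n}. grad_sq_stopped t \<omega>) + x < (\<Sum>t\<in>{1..<n}. inc t \<omega>)}"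

text \<open>Hoeffding's convexity bound gives \<open>exp (\<theta> x - \<theta>\<^sup>2 c\<^sup>2 / 2) \<le> 1 + x \<cdot> sinh_weight\<close> for
  \<open>\<bar>x\<bar> \<le> c\<close>.  The weight is known at time \<open>t\<close>, so it is orthogonal to the conditionally
  centred increment \<open>inc t\<close>, which makes \<open>exp (mg_exponent \<theta> n)\<close> a supermartingale.\<close>

definition sinh_weight :: "real \<Rightarrow> nat \<Rightarrow> 'm \<Rightarrow> real" where
  "sinh_weight \<theta> t \<omega> =
    exp (- (\<theta>\<^sup>2 / 2) * (inc_scale t \<omega>)\<^sup>2) * (sinh (\<theta> * inc_scale t \<omega>) / inc_scale t \<omega>)"

lemma f'_measurable[measurable]: "f' \<in> borel_measurable borel"
proof (rule borel_measurable_continuous_onI)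
  have "\<beta>-lipschitz_on UNIV f'"
    using smooth \<beta>_pos by (intro lipschitz_onI) (auto simp: dist_norm)
  then show "continuous_on UNIV f'"
    by (rule lipschitz_on_continuous_on)
qed

lemma f_measurable[measurable]: "f \<in> borel_measurable borel"
  using f_deriv has_derivative_continuous
  by (intro borel_measurable_continuous_onI continuous_at_imp_continuous_on) blast

lemma hist_subalgebra: "subalgebra M (hist n)"
proof -
  have "(\<lambda>\<omega>. \<lambda>i\<in>{1..<n}. g i \<omega>) \<in> M \<rightarrow>\<^sub>M PiM {1..<n} (\<lambda>_. borel)"
    using g_measurable by (rule measurable_restrict)
  then show ?thesis
    unfolding subalgebra_def hist_def hist_alg_def using sets_image_in_sets[OF refl] by simp
qed

lemma hist_sigma_finite: "sigma_finite_subalgebra M (hist n)"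
proof (rule sigma_finite_subalgebra.intro)
  show "subalgebra M (hist n)" by (rule hist_subalgebra)
  show "sigma_finite_measure (restr_to_subalg M (hist n))"
    using prob_space_restr_to_subalg[OF hist_subalgebra M_prob_space]
    by (simp add: prob_space_imp_sigma_finite)
qed

lemma g_measurable_hist: "1 \<le> i \<Longrightarrow> i < n \<Longrightarrow> g i \<in> borel_measurable (hist n)"
proof -
  assume "1 \<le> i" "i < n"
  have "(\<lambda>\<omega>. \<lambda>i\<in>{1..<n}. g i \<omega>) \<in> hist n \<rightarrow>\<^sub>M PiM {1..<n} (\<lambda>_. borel)"
    unfolding hist_def hist_alg_def by (rule measurable_vimage_algebra1) (auto simp: space_PiM)
  from measurable_compose[OF this measurable_component_singleton[of i]] \<open>1 \<le> i\<close> \<open>i < n\<close>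
  show ?thesis by simp
qed

lemma w_Suc: "1 \<le> t \<Longrightarrow> w (Suc t) \<omega> = w t \<omega> - \<eta> *\<^sub>R g t \<omega>"
  by (simp add: step \<eta>_def)

lemma w_measurable_hist: "1 \<le> i \<Longrightarrow> i \<le> n \<Longrightarrow> w i \<in> borel_measurable (hist n)"
proof (induction i)
  case (Suc i)
  show ?case
  proof (cases "i = 0")
    case True
    then show ?thesis by (simp add: init[unfolded One_nat_def])
  next
    case False
    with Suc have [measurable]: "w i \<in> borel_measurable (hist n)" "g i \<in> borel_measurable (hist n)"
      using g_measurable_hist by auto
    show ?thesis using False by (simp add: w_Suc)
  qed
qed simp

lemma w_measurable: "1 \<le> i \<Longrightarrow> w i \<in> borel_measurable M"
  using measurable_from_subalg[OF hist_subalgebra w_measurable_hist[of i i]] by simp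

text \<open>Every process below is adapted: its value at time \<open>t\<close> is a function of \<open>w 1, \<dots>, w t\<close>
  and \<open>g 1, \<dots>, g (t - 1)\<close>.  Measurability is therefore proved once for an arbitrary measure
  \<open>N\<close> in which these are measurable, and instantiated with \<open>M\<close> and with the history \<open>hist n\<close>.\<close>

context
  fixes N :: "'m measure" and n :: nat
  assumes w_meas[measurable]: "\<And>i. 1 \<le> i \<Longrightarrow> i \<le> n \<Longrightarrow> w i \<in> borel_measurable N"
    and g_meas[measurable]: "\<And>i. 1 \<le> i \<Longrightarrow> i < n \<Longrightarrow> g i \<in> borel_measurable N"
begin

lemma gap_measurable_upto: "1 \<le> t \<Longrightarrow> t \<le> n \<Longrightarrow> gap t \<in> borel_measurable N"
  and grad_measurable_upto: "1 \<le> t \<Longrightarrow> t \<le> n \<Longrightarrow> grad t \<in> borel_measurable N"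
proof -
  assume "1 \<le> t" "t \<le> n"
  note [measurable] = w_meas[OF this]
  show "gap t \<in> borel_measurable N" "grad t \<in> borel_measurable N"
    unfolding gap_def grad_def by measurable
qed

lemma active_measurable_upto: "t \<le> n \<Longrightarrow> Measurable.pred N (active t)"
  unfolding active_def
proof (intro pred_intros_finite)
  fix s assume "t \<le> n" "s \<in> {1..t}"
  then have [measurable]: "gap s \<in> borel_measurable N"
    by (intro gap_measurable_upto) auto
  show "Measurable.pred N (\<lambda>\<omega>. gap s \<omega> \<le> gap_bound)" by measurable
qed simp

lemma grad_sq_stopped_measurable_upto: "1 \<le> t \<Longrightarrow> t \<le> n \<Longrightarrow> grad_sq_stopped t \<in> borel_measurable N"
  and inc_scale_measurable_upto: "1 \<le> t \<Longrightarrow> t \<le> n \<Longrightarrow> inc_scale t \<in> borel_measurable N"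
  and sinh_weight_measurable_upto: "1 \<le> t \<Longrightarrow> t \<le> n \<Longrightarrow> sinh_weight \<theta> t \<in> borel_measurable N"
proof -
  assume "1 \<le> t" "t \<le> n"
  note [measurable] = active_measurable_upto[OF \<open>t \<le> n\<close>] grad_measurable_upto[OF \<open>1 \<le> t\<close> \<open>t \<le> n\<close>]
  show "grad_sq_stopped t \<in> borel_measurable N" "inc_scale t \<in> borel_measurable N"
    "sinh_weight \<theta> t \<in> borel_measurable N"
    unfolding sinh_weight_def inc_scale_def grad_sq_stopped_def by measurable
qed

lemma inc_measurable_upto: "1 \<le> t \<Longrightarrow> t < n \<Longrightarrow> inc t \<in> borel_measurable N"
proof -
  assume "1 \<le> t" "t < n"
  with active_measurable_upto grad_measurable_upto g_meas
  have [measurable]: "Measurable.pred N (active t)" "grad t \<in> borel_measurable N"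
    "g t \<in> borel_measurable N"
    by auto
  show ?thesis
    unfolding inc_def mart_inc_def noise_def by measurable
qed

lemma mg_exponent_measurable_upto: "mg_exponent \<theta> n \<in> borel_measurable N"
  unfolding mg_exponent_def
  by (intro borel_measurable_sum borel_measurable_diff borel_measurable_times borel_measurable_power
      inc_measurable_upto inc_scale_measurable_upto) auto

end

lemma stopped_measurable:
  assumes "1 \<le> t"
  shows "grad_sq_stopped t \<in> borel_measurable M" "inc t \<in> borel_measurable M"
  using assms w_measurable g_measurable
  by (auto intro: grad_sq_stopped_measurable_upto[where n = "Suc t"] inc_measurable_upto[where n = "Suc t"])

lemma hist_measurable:
  assumes "1 \<le> t"
  shows "mg_exponent \<theta> t \<in> borel_measurable (hist t)" "sinh_weight \<theta> t \<in> borel_measurable (hist t)"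
    "Measurable.pred (hist t) (active t)" "grad t \<in> borel_measurable (hist t)"
  using assms w_measurable_hist g_measurable_hist
  by (auto intro: mg_exponent_measurable_upto sinh_weight_measurable_upto[where n = t]
      active_measurable_upto[where n = t] grad_measurable_upto[where n = t])

lemma excess_event_sets: "excess_event c x n \<in> events"
proof -
  have [measurable]: "(\<lambda>\<omega>. \<Sum>t\<in>{1..<n}. grad_sq_stopped t \<omega>) \<in> borel_measurable M"
    "(\<lambda>\<omega>. \<Sum>t\<in>{1..<n}. inc t \<omega>) \<in> borel_measurable M"
    using stopped_measurable by (auto intro!: borel_measurable_sum)
  show ?thesis
    unfolding excess_event_def by measurable
qed

lemma active_measurable[measurable]: "Measurable.pred M (active t)"
  using w_measurable g_measurable by (intro active_measurable_upto[where n = t]) auto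

lemma grad_measurable[measurable]: "1 \<le> t \<Longrightarrow> grad t \<in> borel_measurable M"
  using w_measurable g_measurable by (intro grad_measurable_upto[where n = t]) auto

lemma mg_exponent_measurable[measurable]: "mg_exponent \<theta> n \<in> borel_measurable M"
  using w_measurable g_measurable by (intro mg_exponent_measurable_upto) auto

lemma noise_ok_measurable[measurable]: "Measurable.pred M noise_ok"
  unfolding noise_ok_def noise_def grad_def
proof (intro pred_intros_finite)
  fix t assume "t \<in> {1..T}"
  then have [measurable]: "w t \<in> borel_measurable M" "g t \<in> borel_measurable M"
    using w_measurable g_measurable by auto
  show "Measurable.pred M (\<lambda>\<omega>. (norm (g t \<omega> - f' (w t \<omega>)))\<^sup>2 \<le> \<sigma>0\<^sup>2 + \<sigma>1\<^sup>2 * (norm (f' (w t \<omega>)))\<^sup>2)"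
    by measurable
qed simp

lemma AE_noise_ok: "AE \<omega> in M. noise_ok \<omega>"
  unfolding noise_ok_def noise_def grad_def
  by (rule AE_finite_allI) (use noise in auto)

definition inc_bound :: real where
  "inc_bound = \<eta> * sqrt (var_proxy * (2 * \<beta> * gap_bound))"

lemma grad_norm_sq_le_gap: "(norm (grad t \<omega>))\<^sup>2 \<le> 2 * \<beta> * gap t \<omega>"
  unfolding grad_def gap_def
  using lipschitz_gradient_norm_sq_le[OF f_deriv smooth \<beta>_pos min_le] .

lemma active_imp_grad_norm_sq_le:
  assumes "active t \<omega>" "1 \<le> t"
  shows "(norm (grad t \<omega>))\<^sup>2 \<le> 2 * \<beta> * gap_bound"
proof -
  have "gap t \<omega> \<le> gap_bound"
    using assms by (simp add: active_def)
  with \<beta>_pos grad_norm_sq_le_gap[of t \<omega>] show ?thesis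
    by (smt (verit) mult_left_mono)
qed

lemma grad_sq_stopped_nonneg: "0 \<le> grad_sq_stopped t \<omega>"
  by (simp add: grad_sq_stopped_def)

lemma grad_sq_stopped_le: "1 \<le> t \<Longrightarrow> grad_sq_stopped t \<omega> \<le> 2 * \<beta> * gap_bound"
  using active_imp_grad_norm_sq_le gap_bound_pos \<beta>_pos by (simp add: grad_sq_stopped_def)

lemma inc_scale_nonneg: "0 \<le> inc_scale t \<omega>"
  using \<eta>_pos var_proxy_nonneg grad_sq_stopped_nonneg by (simp add: inc_scale_def)

lemma inc_scale_sq: "(inc_scale t \<omega>)\<^sup>2 = \<eta>\<^sup>2 * var_proxy * grad_sq_stopped t \<omega>"
  using var_proxy_nonneg grad_sq_stopped_nonneg by (simp add: inc_scale_def power_mult_distrib)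

lemma inc_scale_le: "1 \<le> t \<Longrightarrow> inc_scale t \<omega> \<le> inc_bound"
  unfolding inc_scale_def inc_bound_def using \<eta>_pos var_proxy_nonneg grad_sq_stopped_le
  by (intro mult_left_mono real_sqrt_le_mono) auto

lemma inc_bound_nonneg: "0 \<le> inc_bound"
  using inc_scale_nonneg inc_scale_le[of 1] by (meson order_trans le_refl)

lemma active_imp_grad_norm_le:
  "active t \<omega> \<Longrightarrow> 1 \<le> t \<Longrightarrow> norm (grad t \<omega>) \<le> sqrt (2 * \<beta> * gap_bound)"
  using active_imp_grad_norm_sq_le by (rule real_le_rsqrt)

lemma active_imp_noise_norm_le:
  assumes "noise_ok \<omega>" "t \<in> {1..T}" "active t \<omega>"
  shows "norm (noise t \<omega>) \<le> sqrt var_proxy"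
proof (rule real_le_rsqrt)
  have "(norm (noise t \<omega>))\<^sup>2 \<le> \<sigma>0\<^sup>2 + \<sigma>1\<^sup>2 * (norm (grad t \<omega>))\<^sup>2"
    using assms by (auto simp: noise_ok_def)
  also have "\<dots> \<le> var_proxy"
    unfolding var_proxy_def using active_imp_grad_norm_sq_le assms(2,3)
    by (intro add_left_mono mult_left_mono) auto
  finally show "(norm (noise t \<omega>))\<^sup>2 \<le> var_proxy" .
qed

lemma abs_inc_le_inc_scale:
  assumes "noise_ok \<omega>" "t \<in> {1..T}"
  shows "\<bar>inc t \<omega>\<bar> \<le> inc_scale t \<omega>"
proof (cases "active t \<omega>")
  case True
  have "0 \<le> 1 - \<beta> * \<eta>" "1 - \<beta> * \<eta> \<le> 1"
    using \<beta>_\<eta>_le \<beta>_pos \<eta>_pos by auto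
  then have "\<bar>inc t \<omega>\<bar> \<le> \<eta> * \<bar>grad t \<omega> \<bullet> noise t \<omega>\<bar>"
    using True \<eta>_pos
    by (auto simp: inc_def mart_inc_def abs_mult intro!: mult_left_le_one_le)
  also have "\<dots> \<le> \<eta> * (norm (grad t \<omega>) * norm (noise t \<omega>))"
    using Cauchy_Schwarz_ineq2[of "grad t \<omega>" "noise t \<omega>"] \<eta>_pos by (intro mult_left_mono) auto
  also have "\<dots> \<le> \<eta> * (norm (grad t \<omega>) * sqrt var_proxy)"
    using active_imp_noise_norm_le[OF assms True] \<eta>_pos by (intro mult_left_mono) auto
  also have "\<dots> = inc_scale t \<omega>"
    using True by (simp add: inc_scale_def grad_sq_stopped_def real_sqrt_mult mult.commute)
  finally show ?thesis .
qed (simp add: inc_def inc_scale_nonneg)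

lemma abs_inc_le_inc_bound: "noise_ok \<omega> \<Longrightarrow> t \<in> {1..T} \<Longrightarrow> \<bar>inc t \<omega>\<bar> \<le> inc_bound"
  using abs_inc_le_inc_scale inc_scale_le by (meson atLeastAtMost_iff order_trans)

lemma exp_mg_increment_le:
  assumes "0 \<le> \<theta>" "noise_ok \<omega>" "t \<in> {1..T}"
  shows "exp (\<theta> * inc t \<omega> - \<theta>\<^sup>2 / 2 * (inc_scale t \<omega>)\<^sup>2) \<le> 1 + inc t \<omega> * sinh_weight \<theta> t \<omega>"
proof -
  define c where "c = inc_scale t \<omega>"
  have inc_le: "\<bar>inc t \<omega>\<bar> \<le> c"
    unfolding c_def using abs_inc_le_inc_scale[OF assms(2,3)] .
  show ?thesis
  proof (cases "c = 0")
    case True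
    then show ?thesis using inc_le by (simp add: c_def)
  next
    case False
    then have "c > 0" using inc_scale_nonneg by (simp add: c_def order_less_le)
    define E where "E = exp (- (\<theta>\<^sup>2 / 2) * c\<^sup>2)"
    have "exp (\<theta> * inc t \<omega> - \<theta>\<^sup>2 / 2 * c\<^sup>2) = exp (\<theta> * inc t \<omega>) * E"
      by (simp add: E_def flip: exp_add)
    also have "\<dots> \<le> (cosh (\<theta> * c) + inc t \<omega> / c * sinh (\<theta> * c)) * E"
      using exp_le_cosh_plus_sinh[OF inc_le \<open>c > 0\<close> assms(1)] by (simp add: E_def)
    also have "\<dots> = cosh (\<theta> * c) * E + inc t \<omega> * sinh_weight \<theta> t \<omega>"
      by (simp add: sinh_weight_def E_def c_def algebra_simps)
    also have "cosh (\<theta> * c) * E \<le> exp ((\<theta> * c)\<^sup>2 / 2) * E"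
      using cosh_le_exp_half_square[of "\<theta> * c"] assms(1) \<open>c > 0\<close> by (simp add: E_def)
    also have "exp ((\<theta> * c)\<^sup>2 / 2) * E = 1"
      by (simp add: E_def power_mult_distrib flip: exp_add)
    finally show ?thesis by (simp add: c_def)
  qed
qed

lemma sinh_weight_nonneg: "0 \<le> \<theta> \<Longrightarrow> 0 \<le> sinh_weight \<theta> t \<omega>"
  using inc_scale_nonneg by (simp add: sinh_weight_def)

lemma sinh_weight_le:
  assumes "0 \<le> \<theta>" "1 \<le> t"
  shows "sinh_weight \<theta> t \<omega> \<le> \<theta> * exp (\<theta> * inc_bound)"
proof (cases "inc_scale t \<omega> = 0")
  case False
  define c where "c = inc_scale t \<omega>"
  have "c > 0" using False inc_scale_nonneg by (simp add: c_def order_less_le)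
  have "sinh_weight \<theta> t \<omega> = exp (- (\<theta>\<^sup>2 / 2) * c\<^sup>2) * (sinh (\<theta> * c) / c)"
    by (simp add: sinh_weight_def c_def)
  also have "\<dots> \<le> sinh (\<theta> * c) / c"
    using \<open>c > 0\<close> assms(1) by (intro mult_left_le_one_le) auto
  also have "\<dots> \<le> \<theta> * c * exp (\<theta> * c) / c"
    using sinh_le_mult_exp[of "\<theta> * c"] \<open>c > 0\<close> assms(1) by (intro divide_right_mono) auto
  also have "\<dots> \<le> \<theta> * exp (\<theta> * inc_bound)"
    using \<open>c > 0\<close> assms inc_scale_le[OF assms(2)] by (simp add: c_def mult_left_mono)
  finally show ?thesis .
qed (use assms in \<open>simp add: sinh_weight_def\<close>)

lemma mg_exponent_le:
  assumes "0 \<le> \<theta>" "noise_ok \<omega>" "n \<le> Suc T"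
  shows "mg_exponent \<theta> n \<omega> \<le> real n * (\<theta> * inc_bound)"
proof -
  have "mg_exponent \<theta> n \<omega> \<le> (\<Sum>t\<in>{1..<n}. \<theta> * inc_bound)"
    unfolding mg_exponent_def
  proof (rule sum_mono)
    fix t assume "t \<in> {1..<n}"
    then have "\<bar>inc t \<omega>\<bar> \<le> inc_bound"
      using abs_inc_le_inc_bound[OF assms(2)] assms(3) by auto
    then have "\<theta> * inc t \<omega> \<le> \<theta> * inc_bound"
      using assms(1) by (intro mult_left_mono) auto
    moreover have "0 \<le> \<theta>\<^sup>2 / 2 * (inc_scale t \<omega>)\<^sup>2" by simp
    ultimately show "\<theta> * inc t \<omega> - \<theta>\<^sup>2 / 2 * (inc_scale t \<omega>)\<^sup>2 \<le> \<theta> * inc_bound"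
      by linarith
  qed
  also have "\<dots> \<le> real n * (\<theta> * inc_bound)"
    using assms(1) inc_bound_nonneg by (simp add: mult_right_mono)
  finally show ?thesis .
qed

section \<open>An exponential supermartingale\<close>

lemma integral_mult_inc_eq_0:
  assumes n: "1 \<le> n" "n \<le> T" and Z: "Z \<in> borel_measurable (hist n)"
    and Z_bounded: "AE \<omega> in M. \<bar>Z \<omega>\<bar> \<le> B"
  shows "(\<integral>\<omega>. Z \<omega> * inc n \<omega> \<partial>M) = 0"
proof -
  define k where "k = - (\<eta> * (1 - \<beta> * \<eta>))"
  define R where "R = sqrt (2 * \<beta> * gap_bound)"
  define C where "C = \<bar>k\<bar> * (\<bar>B\<bar> * (R * (R + sqrt var_proxy)))"
  define V where "V \<omega> = (if active n \<omega> then k * Z \<omega> else 0) *\<^sub>R grad n \<omega>" for \<omega>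
  note [measurable] = Z hist_measurable[OF n(1)]
  have V_measurable: "V \<in> borel_measurable (hist n)"
    unfolding V_def by measurable
  have V_bounded: "norm (V \<omega>) * norm y \<le> C"
    if "\<bar>Z \<omega>\<bar> \<le> B" "active n \<omega> \<Longrightarrow> norm y \<le> R + sqrt var_proxy" for \<omega> y
  proof (cases "active n \<omega>")
    case True
    have "norm (V \<omega>) * norm y = \<bar>k\<bar> * (\<bar>Z \<omega>\<bar> * (norm (grad n \<omega>) * norm y))"
      using True by (simp add: V_def abs_mult)
    also have "\<dots> \<le> C"
      unfolding C_def using that True active_imp_grad_norm_le[OF True n(1)] \<beta>_pos gap_bound_pos
      by (intro mult_left_mono mult_mono) (auto simp: R_def)
    finally show ?thesis .
  qed (use \<beta>_pos gap_bound_pos var_proxy_nonneg in \<open>simp add: V_def C_def R_def\<close>)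
  have norms_le: "norm (grad n \<omega>) \<le> R + sqrt var_proxy" "norm (g n \<omega>) \<le> R + sqrt var_proxy"
    if "noise_ok \<omega>" "active n \<omega>" for \<omega>
  proof -
    have "norm (grad n \<omega>) \<le> R" "norm (noise n \<omega>) \<le> sqrt var_proxy" "0 \<le> sqrt var_proxy"
      using that n active_imp_grad_norm_le active_imp_noise_norm_le var_proxy_nonneg
      by (auto simp: R_def)
    moreover have "norm (g n \<omega>) \<le> norm (grad n \<omega>) + norm (noise n \<omega>)"
      using norm_triangle_ineq[of "grad n \<omega>" "noise n \<omega>"] by (simp add: noise_def)
    ultimately show "norm (grad n \<omega>) \<le> R + sqrt var_proxy" "norm (g n \<omega>) \<le> R + sqrt var_proxy"
      by linarith+
  qed
  have "Z \<omega> * inc n \<omega> = V \<omega> \<bullet> (g n \<omega> - grad n \<omega>)" for \<omega>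
    by (simp add: V_def inc_def mart_inc_def noise_def k_def)
  then have "(\<integral>\<omega>. Z \<omega> * inc n \<omega> \<partial>M) = (\<integral>\<omega>. V \<omega> \<bullet> (g n \<omega> - grad n \<omega>) \<partial>M)"
    by simp
  also have "\<dots> = 0"
  proof (rule integral_inner_cond_exp_centered[OF _ hist_sigma_finite V_measurable])
    show "AE \<omega> in M. real_cond_exp M (hist n) (\<lambda>\<omega>. g n \<omega> \<bullet> b) \<omega> = grad n \<omega> \<bullet> b"
      if "b \<in> Basis" for b
      using unbiased[OF n that] by (simp add: hist_def grad_def)
    show "AE \<omega> in M. norm (V \<omega>) * norm (g n \<omega>) \<le> C"
      "AE \<omega> in M. norm (V \<omega>) * norm (grad n \<omega>) \<le> C"
      using AE_noise_ok Z_bounded by (auto intro!: V_bounded norms_le elim: AE_mp)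
  qed (simp_all add: finite_measure_axioms g_measurable)
  finally show ?thesis .
qed

lemma mg_exponent_Suc:
  "1 \<le> n \<Longrightarrow> mg_exponent \<theta> (Suc n) \<omega> = mg_exponent \<theta> n \<omega> + (\<theta> * inc n \<omega> - \<theta>\<^sup>2 / 2 * (inc_scale n \<omega>)\<^sup>2)"
  by (simp add: mg_exponent_def atLeastLessThanSuc)

lemma integrable_exp_mg_exponent:
  assumes "0 \<le> \<theta>" "n \<le> Suc T"
  shows "integrable M (\<lambda>\<omega>. exp (mg_exponent \<theta> n \<omega>))"
proof (rule integrable_const_bound[where B = "exp (real n * (\<theta> * inc_bound))"])
  show "AE \<omega> in M. norm (exp (mg_exponent \<theta> n \<omega>)) \<le> exp (real n * (\<theta> * inc_bound))"
    using AE_noise_ok by eventually_elim (use mg_exponent_le assms in auto)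
  show "(\<lambda>\<omega>. exp (mg_exponent \<theta> n \<omega>)) \<in> borel_measurable M"
    by measurable
qed

lemma exp_mg_exponent_Suc_le:
  assumes "0 \<le> \<theta>" "noise_ok \<omega>" "n \<in> {1..T}"
  shows "exp (mg_exponent \<theta> (Suc n) \<omega>)
    \<le> exp (mg_exponent \<theta> n \<omega>) + exp (mg_exponent \<theta> n \<omega>) * sinh_weight \<theta> n \<omega> * inc n \<omega>"
proof -
  have "exp (mg_exponent \<theta> (Suc n) \<omega>)
      = exp (mg_exponent \<theta> n \<omega>) * exp (\<theta> * inc n \<omega> - \<theta>\<^sup>2 / 2 * (inc_scale n \<omega>)\<^sup>2)"
    using assms(3) by (simp add: mg_exponent_Suc exp_add)
  also have "\<dots> \<le> exp (mg_exponent \<theta> n \<omega>) * (1 + inc n \<omega> * sinh_weight \<theta> n \<omega>)"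
    using exp_mg_increment_le[OF assms] by (intro mult_left_mono) auto
  finally show ?thesis
    by (simp add: algebra_simps)
qed

lemma AE_abs_exp_mg_exponent_sinh_weight_le:
  assumes "0 \<le> \<theta>" "1 \<le> n" "n \<le> T"
  shows "AE \<omega> in M. \<bar>exp (mg_exponent \<theta> n \<omega>) * sinh_weight \<theta> n \<omega>\<bar>
    \<le> exp (real n * (\<theta> * inc_bound)) * (\<theta> * exp (\<theta> * inc_bound))"
  using AE_noise_ok
proof eventually_elim
  case (elim \<omega>)
  then show ?case
    using mg_exponent_le[OF assms(1) elim, of n] assms sinh_weight_nonneg[OF assms(1)]
      sinh_weight_le[OF assms(1,2)]
    by (auto simp: abs_mult intro!: mult_mono)
qed

lemma integral_exp_mg_exponent_Suc_le:
  assumes "0 \<le> \<theta>" "1 \<le> n" "n \<le> T"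
  shows "(\<integral>\<omega>. exp (mg_exponent \<theta> (Suc n) \<omega>) \<partial>M) \<le> (\<integral>\<omega>. exp (mg_exponent \<theta> n \<omega>) \<partial>M)"
proof -
  define Z where "Z \<omega> = exp (mg_exponent \<theta> n \<omega>) * sinh_weight \<theta> n \<omega>" for \<omega>
  define B where "B = exp (real n * (\<theta> * inc_bound)) * (\<theta> * exp (\<theta> * inc_bound))"
  note [measurable] = hist_measurable[OF assms(2)] stopped_measurable[OF assms(2)]
  have Z_measurable[measurable]: "Z \<in> borel_measurable (hist n)"
    unfolding Z_def by measurable
  have Z_bounded: "AE \<omega> in M. \<bar>Z \<omega>\<bar> \<le> B"
    unfolding Z_def B_def by (rule AE_abs_exp_mg_exponent_sinh_weight_le[OF assms])
  have integrable_Z_inc: "integrable M (\<lambda>\<omega>. Z \<omega> * inc n \<omega>)"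
  proof (rule integrable_const_bound[where B = "B * inc_bound"])
    show "AE \<omega> in M. norm (Z \<omega> * inc n \<omega>) \<le> B * inc_bound"
      using AE_noise_ok Z_bounded
    proof eventually_elim
      case (elim \<omega>)
      with abs_inc_le_inc_bound assms have "\<bar>inc n \<omega>\<bar> \<le> inc_bound"
        by auto
      with elim(2) show ?case
        by (auto simp: abs_mult intro!: mult_mono)
    qed
  qed (use measurable_from_subalg[OF hist_subalgebra Z_measurable] in measurable)
  have "AE \<omega> in M. exp (mg_exponent \<theta> (Suc n) \<omega>) \<le> exp (mg_exponent \<theta> n \<omega>) + Z \<omega> * inc n \<omega>"
    using AE_noise_ok by eventually_elim (use exp_mg_exponent_Suc_le assms in \<open>auto simp: Z_def\<close>)
  then have "(\<integral>\<omega>. exp (mg_exponent \<theta> (Suc n) \<omega>) \<partial>M)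
      \<le> (\<integral>\<omega>. exp (mg_exponent \<theta> n \<omega>) + Z \<omega> * inc n \<omega> \<partial>M)"
    using integrable_exp_mg_exponent[OF assms(1)] integrable_Z_inc assms
    by (intro integral_mono_AE) auto
  also have "\<dots> = (\<integral>\<omega>. exp (mg_exponent \<theta> n \<omega>) \<partial>M) + (\<integral>\<omega>. Z \<omega> * inc n \<omega> \<partial>M)"
    using integrable_exp_mg_exponent[OF assms(1)] integrable_Z_inc assms by simp
  also have "(\<integral>\<omega>. Z \<omega> * inc n \<omega> \<partial>M) = 0"
    using integral_mult_inc_eq_0[OF assms(2,3) Z_measurable Z_bounded] .
  finally show ?thesis by simp
qed

lemma integral_exp_mg_exponent_le_1:
  assumes "0 \<le> \<theta>"
  shows "n \<le> Suc T \<Longrightarrow> (\<integral>\<omega>. exp (mg_exponent \<theta> n \<omega>) \<partial>M) \<le> 1"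
proof (induction n)
  case (Suc n)
  show ?case
  proof (cases "n = 0")
    case False
    with Suc integral_exp_mg_exponent_Suc_le[OF assms, of n] show ?thesis
      by simp
  qed (simp add: mg_exponent_def)
qed (simp add: mg_exponent_def)

lemma prob_mg_exponent_ge_le:
  assumes "0 \<le> \<theta>" "n \<le> Suc T"
  shows "prob {\<omega> \<in> space M. x \<le> mg_exponent \<theta> n \<omega>} \<le> exp (- x)"
proof -
  have "prob {\<omega> \<in> space M. x \<le> mg_exponent \<theta> n \<omega>} = prob {\<omega> \<in> space M. exp x \<le> exp (mg_exponent \<theta> n \<omega>)}"
    by simp
  also have "\<dots> \<le> (\<integral>\<omega>. exp (mg_exponent \<theta> n \<omega>) \<partial>M) / exp x"
    using integrable_exp_mg_exponent[OF assms] by (intro integral_Markov_inequality_measure) auto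
  also have "\<dots> \<le> 1 / exp x"
    using integral_exp_mg_exponent_le_1[OF assms] by (intro divide_right_mono) auto
  finally show ?thesis
    by (simp add: exp_minus field_simps)
qed

lemma prob_not_noise_ok: "prob {\<omega> \<in> space M. \<not> noise_ok \<omega>} = 0"
proof -
  have "{\<omega> \<in> space M. \<not> noise_ok \<omega>} \<in> events" by measurable
  with AE_noise_ok show ?thesis
    by (simp add: AE_iff_measurable[OF _ refl] measure_def)
qed

lemma prob_excess_event_le:
  assumes "0 < c" "n \<le> Suc T"
  shows "prob (excess_event c (\<eta>\<^sup>2 * var_proxy / (2 * c) * x) n) \<le> exp (- x)" (is "prob ?E \<le> _")
proof (cases "var_proxy = 0")
  case False
  define \<theta> where "\<theta> = 2 * c / (\<eta>\<^sup>2 * var_proxy)"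
  have "\<theta> > 0"
    using assms \<eta>_pos var_proxy_nonneg False by (simp add: \<theta>_def)
  have "?E \<subseteq> {\<omega> \<in> space M. x \<le> mg_exponent \<theta> n \<omega>}"
  unfolding excess_event_def proof safe
    fix \<omega> assume "\<omega> \<in> space M" and
      "c * (\<Sum>t\<in>{1..<n}. grad_sq_stopped t \<omega>) + \<eta>\<^sup>2 * var_proxy / (2 * c) * x < (\<Sum>t\<in>{1..<n}. inc t \<omega>)"
    then have "\<theta> * (c * (\<Sum>t\<in>{1..<n}. grad_sq_stopped t \<omega>) + \<eta>\<^sup>2 * var_proxy / (2 * c) * x)
        < \<theta> * (\<Sum>t\<in>{1..<n}. inc t \<omega>)"
      using \<open>\<theta> > 0\<close> by simp
    moreover have "\<theta> * (\<eta>\<^sup>2 * var_proxy / (2 * c)) = 1"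
      using assms \<eta>_pos False by (simp add: \<theta>_def)
    ultimately have "x < \<theta> * (\<Sum>t\<in>{1..<n}. inc t \<omega>) - \<theta> * c * (\<Sum>t\<in>{1..<n}. grad_sq_stopped t \<omega>)"
      by (simp only: distrib_left mult.assoc[symmetric] mult_1_left)
    also have "\<dots> = mg_exponent \<theta> n \<omega>"
    proof -
      have "\<theta>\<^sup>2 / 2 * (\<eta>\<^sup>2 * var_proxy) = \<theta> * c"
        using assms \<eta>_pos False by (simp add: \<theta>_def power2_eq_square)
      then have "\<theta>\<^sup>2 / 2 * (inc_scale t \<omega>)\<^sup>2 = \<theta> * c * grad_sq_stopped t \<omega>" for t
        by (metis inc_scale_sq mult.assoc)
      then show ?thesis
        by (simp add: mg_exponent_def sum_subtractf sum_distrib_left mult.assoc)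
    qed
    finally show "x \<le> mg_exponent \<theta> n \<omega>" by simp
  qed
  then have "prob ?E \<le> prob {\<omega> \<in> space M. x \<le> mg_exponent \<theta> n \<omega>}"
    by (intro finite_measure_mono) measurable
  also have "\<dots> \<le> exp (- x)"
    using \<open>\<theta> > 0\<close> assms by (intro prob_mg_exponent_ge_le) auto
  finally show ?thesis .
next
  case True
  have "?E \<subseteq> {\<omega> \<in> space M. \<not> noise_ok \<omega>}"
  unfolding excess_event_def proof safe
    fix \<omega> assume "\<omega> \<in> space M" "noise_ok \<omega>" and
      exceeds: "c * (\<Sum>t\<in>{1..<n}. grad_sq_stopped t \<omega>) + \<eta>\<^sup>2 * var_proxy / (2 * c) * x < (\<Sum>t\<in>{1..<n}. inc t \<omega>)"
    have "inc t \<omega> = 0" if "t \<in> {1..<n}" for t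
      using abs_inc_le_inc_scale[OF \<open>noise_ok \<omega>\<close>, of t] that assms(2) True by (simp add: inc_scale_def)
    moreover have "0 \<le> c * (\<Sum>t\<in>{1..<n}. grad_sq_stopped t \<omega>)"
      using assms grad_sq_stopped_nonneg by (simp add: sum_nonneg)
    ultimately show False
      using exceeds True by simp
  qed
  then have "prob ?E \<le> prob {\<omega> \<in> space M. \<not> noise_ok \<omega>}"
    by (intro finite_measure_mono) measurable
  then show ?thesis
    using prob_not_noise_ok exp_gt_zero[of "- x"] by linarith
qed

section \<open>Descent along the trajectory\<close>

lemma gap_1: "gap 1 \<omega> = \<Delta>1"
  by (simp add: gap_def \<Delta>1_def init[unfolded One_nat_def])

lemma gap_nonneg: "0 \<le> gap t \<omega>"
  using min_le by (simp add: gap_def)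

lemma gap_Suc_le:
  assumes "noise_ok \<omega>" "t \<in> {1..T}"
  shows "gap (Suc t) \<omega> \<le> gap t \<omega> - 7 * \<eta> / 8 * (norm (grad t \<omega>))\<^sup>2 + mart_inc t \<omega> + \<beta> * \<eta>\<^sup>2 * \<sigma>0\<^sup>2 / 2"
proof -
  define a where "a = grad t \<omega>"
  define e where "e = noise t \<omega>"
  have step_eq: "w (Suc t) \<omega> - w t \<omega> = - (\<eta> *\<^sub>R (a + e))"
    using w_Suc[of t \<omega>] assms(2) by (simp add: a_def e_def noise_def)
  have noise_le: "e \<bullet> e \<le> \<sigma>0\<^sup>2 + \<sigma>1\<^sup>2 * (a \<bullet> a)"
    using assms by (auto simp: noise_ok_def e_def a_def power2_norm_eq_inner)
  have "gap (Suc t) \<omega> \<le> gap t \<omega> + a \<bullet> (w (Suc t) \<omega> - w t \<omega>) + \<beta> / 2 * (norm (w (Suc t) \<omega> - w t \<omega>))\<^sup>2"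
    using lipschitz_gradient_descent[OF f_deriv smooth, where x = "w t \<omega>" and y = "w (Suc t) \<omega>"]
    by (simp add: gap_def a_def grad_def)
  also have "\<dots> = gap t \<omega> - \<eta> * (1 - \<beta> * \<eta> / 2) * (a \<bullet> a) + mart_inc t \<omega> + \<beta> * \<eta>\<^sup>2 / 2 * (e \<bullet> e)"
    unfolding step_eq power2_norm_eq_inner
    by (simp add: mart_inc_def a_def[symmetric] e_def[symmetric] inner_add_left inner_add_right
        inner_commute[of e a] power2_eq_square algebra_simps)
  also have "\<dots> \<le> gap t \<omega> - \<eta> * (1 - \<beta> * \<eta> / 2) * (a \<bullet> a) + mart_inc t \<omega>
      + \<beta> * \<eta>\<^sup>2 / 2 * (\<sigma>0\<^sup>2 + \<sigma>1\<^sup>2 * (a \<bullet> a))"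
    using noise_le \<beta>_pos by (intro add_left_mono mult_left_mono) auto
  also have "\<dots> = gap t \<omega> - \<eta> * (1 - \<beta> * \<eta> * (1 + \<sigma>1\<^sup>2) / 2) * (a \<bullet> a) + mart_inc t \<omega>
      + \<beta> * \<eta>\<^sup>2 * \<sigma>0\<^sup>2 / 2"
    by (simp add: power2_eq_square field_simps)
  also have "\<dots> \<le> gap t \<omega> - 7 * \<eta> / 8 * (a \<bullet> a) + mart_inc t \<omega> + \<beta> * \<eta>\<^sup>2 * \<sigma>0\<^sup>2 / 2"
  proof -
    have "7 / 8 \<le> 1 - \<beta> * \<eta> * (1 + \<sigma>1\<^sup>2) / 2"
      using \<beta>_\<eta>_\<sigma>1_le by linarith
    then have "7 * \<eta> / 8 * (a \<bullet> a) \<le> \<eta> * (1 - \<beta> * \<eta> * (1 + \<sigma>1\<^sup>2) / 2) * (a \<bullet> a)"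
      using \<eta>_pos by (intro mult_right_mono) auto
    then show ?thesis by linarith
  qed
  finally show ?thesis
    by (simp add: a_def power2_norm_eq_inner)
qed

lemma gap_le_telescoped:
  assumes "noise_ok \<omega>" "1 \<le> k" "k \<le> Suc T"
  shows "gap k \<omega> \<le> \<Delta>1 - 7 * \<eta> / 8 * (\<Sum>t\<in>{1..<k}. (norm (grad t \<omega>))\<^sup>2)
    + (\<Sum>t\<in>{1..<k}. mart_inc t \<omega>) + real (k - 1) * (\<beta> * \<eta>\<^sup>2 * \<sigma>0\<^sup>2 / 2)"
  using assms(2)
proof (induction k rule: dec_induct)
  case base
  then show ?case using gap_1 by simp
next
  case (step n)
  then have "n \<in> {1..T}" using assms(3) by simp
  define c where "c = \<beta> * \<eta>\<^sup>2 * \<sigma>0\<^sup>2 / 2"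
  have "gap (Suc n) \<omega> \<le> gap n \<omega> - 7 * \<eta> / 8 * (norm (grad n \<omega>))\<^sup>2 + mart_inc n \<omega> + c"
    unfolding c_def by (rule gap_Suc_le[OF assms(1) \<open>n \<in> {1..T}\<close>])
  also have "\<dots> \<le> \<Delta>1 - 7 * \<eta> / 8 * (\<Sum>t\<in>{1..<n}. (norm (grad t \<omega>))\<^sup>2) + (\<Sum>t\<in>{1..<n}. mart_inc t \<omega>)
      + real (n - 1) * c - 7 * \<eta> / 8 * (norm (grad n \<omega>))\<^sup>2 + mart_inc n \<omega> + c"
    using step.IH unfolding c_def by linarith
  also have "\<dots> = \<Delta>1 - 7 * \<eta> / 8 * ((\<Sum>t\<in>{1..<n}. (norm (grad t \<omega>))\<^sup>2) + (norm (grad n \<omega>))\<^sup>2)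
      + ((\<Sum>t\<in>{1..<n}. mart_inc t \<omega>) + mart_inc n \<omega>) + (real (n - 1) + 1) * c"
    by (simp add: algebra_simps)
  finally show ?case
    using step.hyps(1) by (simp add: c_def atLeastLessThanSuc add.commute)
qed

definition rate :: real where
  "rate = (\<beta> * \<alpha> + \<Delta>1 / \<alpha>) * (2 * \<sigma>0 / sqrt (real T))
  + (8 * \<beta> * \<Delta>1 * (1 + 4 * \<sigma>1\<^sup>2) * log_T + 24 * \<sigma>1\<^sup>2 * \<beta>\<^sup>2 * \<alpha>\<^sup>2 * log_\<delta>
     + 15 * \<sigma>0\<^sup>2 * log_\<delta>) * (1 / real T)"

lemma early_excess_threshold_le:
  "4 / 7 * \<eta> * var_proxy * ln (real T / \<delta>) \<le> 4 / 7 * (noise_scale * log_T) + 2 / 7 * gap_bound"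
proof -
  have "\<eta> * var_proxy * log_T = (\<eta> * \<sigma>0\<^sup>2) * log_T + 2 * gap_bound * (\<beta> * \<eta> * \<sigma>1\<^sup>2 * log_T)"
    by (simp add: var_proxy_def algebra_simps)
  also have "\<dots> \<le> noise_scale * log_T + 2 * gap_bound * (1 / 4)"
    using \<eta>_\<sigma>0_sq_le_noise_scale one_le_log_T \<beta>_\<eta>_\<sigma>1_log_T_le gap_bound_pos
    by (intro add_mono mult_right_mono mult_left_mono) auto
  finally have "\<eta> * var_proxy * log_T \<le> noise_scale * log_T + gap_bound / 2"
    by simp
  moreover have "4 / 7 * \<eta> * var_proxy * ln (real T / \<delta>) \<le> 4 / 7 * (\<eta> * var_proxy * log_T)"
    using mult_left_mono[OF ln_le_log_T, of "4 / 7 * \<eta> * var_proxy"] \<eta>_pos var_proxy_nonneg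
    by (simp add: mult.assoc)
  ultimately show ?thesis
    by linarith
qed

lemma drift_sum_le: "m \<le> T \<Longrightarrow> real m * (\<beta> * \<eta>\<^sup>2 * \<sigma>0\<^sup>2 / 2) \<le> \<beta> * \<alpha>\<^sup>2 / 2"
proof -
  assume "m \<le> T"
  then have "real m * (\<beta> * \<eta>\<^sup>2 * \<sigma>0\<^sup>2 / 2) \<le> \<beta> / 2 * (\<eta>\<^sup>2 * \<sigma>0\<^sup>2 * real T)"
    using \<beta>_pos by (simp add: mult_right_mono mult.commute mult.left_commute)
  also have "\<dots> \<le> \<beta> / 2 * \<alpha>\<^sup>2"
    using \<eta>_sq_\<sigma>0_sq_T_le \<beta>_pos by (intro mult_left_mono) auto
  finally show ?thesis by simp
qed

lemma stopped_sums_eq: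
  assumes "\<And>t. t \<in> {1..<k} \<Longrightarrow> active t \<omega>"
  shows "(\<Sum>t\<in>{1..<k}. inc t \<omega>) = (\<Sum>t\<in>{1..<k}. mart_inc t \<omega>)"
    "(\<Sum>t\<in>{1..<k}. grad_sq_stopped t \<omega>) = (\<Sum>t\<in>{1..<k}. (norm (grad t \<omega>))\<^sup>2)"
  using assms by (auto simp: inc_def grad_sq_stopped_def intro!: sum.cong)

lemma gap_le_gap_bound:
  assumes "noise_ok \<omega>"
    and concentration: "\<And>k. k \<in> {2..Suc T} \<Longrightarrow> (\<Sum>t\<in>{1..<k}. inc t \<omega>)
      \<le> 7 * \<eta> / 8 * (\<Sum>t\<in>{1..<k}. grad_sq_stopped t \<omega>) + 4 / 7 * \<eta> * var_proxy * ln (real T / \<delta>)"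
  shows "k \<in> {1..Suc T} \<Longrightarrow> gap k \<omega> \<le> gap_bound"
proof (induction k rule: less_induct)
  case (less k)
  show ?case
  proof (cases "k = 1")
    case True
    then show ?thesis
      using gap_1 gap_bound_pos \<Delta>1_nonneg noise_scale_nonneg one_le_log_T \<beta>_pos
      by (simp add: gap_bound_def add_nonneg_nonneg)
  next
    case False
    with less.prems have k: "k \<in> {2..Suc T}" by auto
    have "active t \<omega>" if "t \<in> {1..<k}" for t
      using that less.IH k by (auto simp: active_def)
    note sums = stopped_sums_eq[OF this]
    have "gap k \<omega> \<le> \<Delta>1 - 7 * \<eta> / 8 * (\<Sum>t\<in>{1..<k}. (norm (grad t \<omega>))\<^sup>2)
        + (\<Sum>t\<in>{1..<k}. mart_inc t \<omega>) + real (k - 1) * (\<beta> * \<eta>\<^sup>2 * \<sigma>0\<^sup>2 / 2)"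
      using k by (intro gap_le_telescoped[OF assms(1)]) auto
    moreover have "real (k - 1) * (\<beta> * \<eta>\<^sup>2 * \<sigma>0\<^sup>2 / 2) \<le> \<beta> * \<alpha>\<^sup>2 / 2"
      using k by (intro drift_sum_le) auto
    moreover have "(\<Sum>t\<in>{1..<k}. mart_inc t \<omega>)
        \<le> 7 * \<eta> / 8 * (\<Sum>t\<in>{1..<k}. (norm (grad t \<omega>))\<^sup>2) + 4 / 7 * \<eta> * var_proxy * ln (real T / \<delta>)"
      using concentration[OF k] by (simp only: sums)
    ultimately have "gap k \<omega> \<le> \<Delta>1 + 4 / 7 * \<eta> * var_proxy * ln (real T / \<delta>) + \<beta> * \<alpha>\<^sup>2 / 2"
      by linarith
    moreover have "gap_bound = 2 * \<Delta>1 + 2 * (\<beta> * \<alpha>\<^sup>2) + 3 * (noise_scale * log_T)"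
      by (simp add: gap_bound_def)
    moreover have "0 \<le> \<beta> * \<alpha>\<^sup>2" "0 \<le> noise_scale * log_T"
      using \<beta>_pos noise_scale_nonneg one_le_log_T by auto
    ultimately show ?thesis
      using early_excess_threshold_le \<Delta>1_nonneg by linarith
  qed
qed

lemma sum_grad_sq_le:
  assumes "noise_ok \<omega>" and active: "\<And>t. t \<in> {1..T} \<Longrightarrow> active t \<omega>"
    and concentration: "(\<Sum>t\<in>{1..<Suc T}. inc t \<omega>)
      \<le> 3 * \<eta> / 8 * (\<Sum>t\<in>{1..<Suc T}. grad_sq_stopped t \<omega>) + 4 / 3 * \<eta> * var_proxy * ln (1 / \<delta>)"
  shows "(\<Sum>t=1..T. (norm (grad t \<omega>))\<^sup>2) \<le> 2 * (\<Delta>1 / \<eta>) + 8 / 3 * (var_proxy * log_\<delta>) + real T * \<beta> * \<eta> * \<sigma>0\<^sup>2"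
proof -
  define G where "G = (\<Sum>t=1..T. (norm (grad t \<omega>))\<^sup>2)"
  have G_eq: "(\<Sum>t\<in>{1..<Suc T}. (norm (grad t \<omega>))\<^sup>2) = G"
    by (simp add: G_def atLeastLessThanSuc_atLeastAtMost)
  have "active t \<omega>" if "t \<in> {1..<Suc T}" for t
    using active that by simp
  note sums = stopped_sums_eq[OF this]
  define c where "c = \<beta> * \<eta>\<^sup>2 * \<sigma>0\<^sup>2 / 2"
  have "gap (Suc T) \<omega> \<le> \<Delta>1 - 7 / 8 * (\<eta> * G) + (\<Sum>t\<in>{1..<Suc T}. mart_inc t \<omega>) + real T * c"
    using gap_le_telescoped[OF assms(1), of "Suc T"] T_pos
    by (simp only: G_eq diff_Suc_1 c_def) (simp add: algebra_simps)
  moreover have "(\<Sum>t\<in>{1..<Suc T}. mart_inc t \<omega>) \<le> 3 / 8 * (\<eta> * G) + 4 / 3 * (\<eta> * var_proxy * ln (1 / \<delta>))"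
    using concentration by (simp only: sums G_eq)
  moreover have "\<eta> * var_proxy * ln (1 / \<delta>) \<le> \<eta> * var_proxy * log_\<delta>"
    using ln_le_log_\<delta> \<eta>_pos var_proxy_nonneg by (intro mult_left_mono) auto
  moreover have "0 \<le> gap (Suc T) \<omega>" by (rule gap_nonneg)
  ultimately have "1 / 2 * (\<eta> * G) \<le> \<Delta>1 + 4 / 3 * (\<eta> * var_proxy * log_\<delta>) + real T * c"
    by linarith
  then have "2 / \<eta> * (1 / 2 * (\<eta> * G)) \<le> 2 / \<eta> * (\<Delta>1 + 4 / 3 * (\<eta> * var_proxy * log_\<delta>) + real T * c)"
    using \<eta>_pos by (intro mult_left_mono) auto
  then show ?thesis
    using \<eta>_pos by (simp add: G_def c_def field_simps power2_eq_square)
qed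

lemma \<Delta>1_div_\<eta>_le:
  "2 * (\<Delta>1 / \<eta>) \<le> 8 * (\<beta> * \<Delta>1) + 8 * (\<beta> * \<Delta>1 * \<sigma>1\<^sup>2 * log_T) + 2 * (\<Delta>1 * \<sigma>0 * sqrt (real T) / \<alpha>)"
proof -
  have "2 * (\<Delta>1 / \<eta>) \<le> 2 * \<Delta>1 * (\<eta>1_inv + \<sigma>0 * sqrt (real T) / \<alpha>)"
    using mult_left_mono[OF inverse_\<eta>_le, of "2 * \<Delta>1"] \<Delta>1_nonneg by simp
  then show ?thesis
    by (simp add: \<eta>1_inv_def algebra_simps)
qed

lemma T_\<beta>_\<eta>_\<sigma>0_sq_le: "real T * \<beta> * \<eta> * \<sigma>0\<^sup>2 \<le> \<beta> * \<alpha> * \<sigma>0 * sqrt (real T)"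
proof (cases "\<sigma>0 = 0")
  case False
  then have "\<sigma>0 > 0" using \<sigma>0_nonneg by simp
  have "real T * \<beta> * \<eta> * \<sigma>0\<^sup>2 \<le> real T * \<beta> * (\<alpha> / (\<sigma>0 * sqrt (real T))) * \<sigma>0\<^sup>2"
    using \<eta>_le_noise_term[OF \<open>\<sigma>0 > 0\<close>] \<beta>_pos by (intro mult_right_mono mult_left_mono) auto
  also have "\<dots> = \<beta> * \<alpha> * \<sigma>0 * sqrt (real T)"
    using \<open>\<sigma>0 > 0\<close> T_pos real_sqrt_mult_self[of "real T"]
    by (simp add: field_simps power2_eq_square)
  finally show ?thesis .
qed simp

lemma var_proxy_log_\<delta>_le:
  "var_proxy * log_\<delta> \<le> 5 / 2 * (\<sigma>0\<^sup>2 * log_\<delta>) + 4 * (\<beta> * \<Delta>1 * \<sigma>1\<^sup>2 * log_\<delta>)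
    + 4 * (\<sigma>1\<^sup>2 * \<beta>\<^sup>2 * \<alpha>\<^sup>2 * log_\<delta>)"
proof -
  have "noise_scale \<le> \<sigma>0\<^sup>2 / \<eta>1_inv"
    by (simp add: noise_scale_def)
  then have "noise_scale * \<eta>1_inv \<le> \<sigma>0\<^sup>2"
    using \<eta>1_inv_pos by (simp add: pos_le_divide_eq)
  moreover have "noise_scale * (4 * \<beta> * \<sigma>1\<^sup>2 * log_T) \<le> noise_scale * \<eta>1_inv"
    using noise_scale_nonneg \<beta>_pos by (intro mult_left_mono) (auto simp: \<eta>1_inv_def algebra_simps)
  ultimately have "6 * (\<beta> * \<sigma>1\<^sup>2 * noise_scale * log_T) \<le> 3 / 2 * \<sigma>0\<^sup>2"
    by (simp add: algebra_simps)
  moreover have "var_proxy = \<sigma>0\<^sup>2 + 4 * (\<beta> * \<Delta>1 * \<sigma>1\<^sup>2) + 4 * (\<sigma>1\<^sup>2 * \<beta>\<^sup>2 * \<alpha>\<^sup>2)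
      + 6 * (\<beta> * \<sigma>1\<^sup>2 * noise_scale * log_T)"
    by (simp add: var_proxy_def gap_bound_def power2_eq_square algebra_simps)
  ultimately have "var_proxy \<le> 5 / 2 * \<sigma>0\<^sup>2 + 4 * (\<beta> * \<Delta>1 * \<sigma>1\<^sup>2) + 4 * (\<sigma>1\<^sup>2 * \<beta>\<^sup>2 * \<alpha>\<^sup>2)"
    by linarith
  from mult_right_mono[OF this log_\<delta>_nonneg] show ?thesis
    by (simp add: algebra_simps)
qed

lemma rate_bound:
  "2 * (\<Delta>1 / \<eta>) + 8 / 3 * (var_proxy * log_\<delta>) + real T * \<beta> * \<eta> * \<sigma>0\<^sup>2 \<le> real T * rate"
proof -
  define s where "s = sqrt (real T)"
  have "s > 0" "s * s = real T"
    using T_pos by (simp_all add: s_def)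
  have T_rate: "real T * rate = 2 * (\<beta> * \<alpha> * \<sigma>0 * s) + 2 * (\<Delta>1 * \<sigma>0 * s / \<alpha>)
      + 8 * (\<beta> * \<Delta>1 * log_T) + 32 * (\<beta> * \<Delta>1 * \<sigma>1\<^sup>2 * log_T)
      + 24 * (\<sigma>1\<^sup>2 * \<beta>\<^sup>2 * \<alpha>\<^sup>2 * log_\<delta>) + 15 * (\<sigma>0\<^sup>2 * log_\<delta>)"
    using \<open>s > 0\<close> \<open>s * s = real T\<close>[symmetric] \<alpha>_pos
    by (simp add: rate_def s_def[symmetric] field_simps)
  have "\<beta> * \<Delta>1 \<le> \<beta> * \<Delta>1 * log_T"
    using mult_left_mono[OF one_le_log_T, of "\<beta> * \<Delta>1"] \<beta>_pos \<Delta>1_nonneg by simp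
  moreover have "\<beta> * \<Delta>1 * \<sigma>1\<^sup>2 * log_\<delta> \<le> \<beta> * \<Delta>1 * \<sigma>1\<^sup>2 * log_T"
    using log_\<delta>_le_log_T \<beta>_pos \<Delta>1_nonneg by (intro mult_left_mono) auto
  moreover have "0 \<le> \<beta> * \<alpha> * \<sigma>0 * s" "0 \<le> \<sigma>0\<^sup>2 * log_\<delta>" "0 \<le> \<sigma>1\<^sup>2 * \<beta>\<^sup>2 * \<alpha>\<^sup>2 * log_\<delta>"
    "0 \<le> \<beta> * \<Delta>1 * \<sigma>1\<^sup>2 * log_T"
    using \<beta>_pos \<alpha>_pos \<sigma>0_nonneg \<open>s > 0\<close> log_\<delta>_nonneg \<Delta>1_nonneg one_le_log_T by auto
  ultimately show ?thesis
    unfolding T_rate using \<Delta>1_div_\<eta>_le[folded s_def] T_\<beta>_\<eta>_\<sigma>0_sq_le[folded s_def] var_proxy_log_\<delta>_le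
    by linarith
qed

section \<open>The failure probability\<close>

abbreviation early_excess :: "'m set" where "early_excess \<equiv>
  (\<Union>k\<in>{2..Suc T}. excess_event (7 * \<eta> / 8) (4 / 7 * \<eta> * var_proxy * ln (real T / \<delta>)) k)"
abbreviation final_excess :: "'m set" where "final_excess \<equiv>
  excess_event (3 * \<eta> / 8) (4 / 3 * \<eta> * var_proxy * ln (1 / \<delta>)) (Suc T)"

lemma prob_early_excess_le: "prob early_excess \<le> \<delta>"
proof -
  have scale: "\<eta>\<^sup>2 * var_proxy / (2 * (7 * \<eta> / 8)) = 4 / 7 * \<eta> * var_proxy"
    using \<eta>_pos by (simp add: power2_eq_square field_simps)
  have "prob early_excess \<le> (\<Sum>k\<in>{2..Suc T}. prob (excess_event (7 * \<eta> / 8) (4 / 7 * \<eta> * var_proxy * ln (real T / \<delta>)) k))"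
    using excess_event_sets by (intro measure_UNION_le) auto
  also have "\<dots> \<le> (\<Sum>k\<in>{2..Suc T}. exp (- ln (real T / \<delta>)))"
    using prob_excess_event_le[of "7 * \<eta> / 8", unfolded scale] \<eta>_pos by (intro sum_mono) auto
  also have "\<dots> = \<delta>"
    using T_pos \<delta>_pos by (simp add: exp_minus)
  finally show ?thesis .
qed

lemma prob_final_excess_le: "prob final_excess \<le> \<delta>"
proof -
  have scale: "\<eta>\<^sup>2 * var_proxy / (2 * (3 * \<eta> / 8)) = 4 / 3 * \<eta> * var_proxy"
    using \<eta>_pos by (simp add: power2_eq_square field_simps)
  have "prob final_excess \<le> exp (- ln (1 / \<delta>))"
    using prob_excess_event_le[of "3 * \<eta> / 8" "Suc T", unfolded scale] \<eta>_pos by simp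
  also have "\<dots> = \<delta>"
    using \<delta>_pos by (simp add: exp_minus)
  finally show ?thesis .
qed

lemma good_outside_excess_events:
  assumes "\<omega> \<in> space M" "noise_ok \<omega>" "\<omega> \<notin> early_excess" "\<omega> \<notin> final_excess"
  shows "active (Suc T) \<omega>"
    and "1 / real T * (\<Sum>t=1..T. (norm (grad t \<omega>))\<^sup>2) \<le> rate"
proof -
  show bounded: "active (Suc T) \<omega>"
    using gap_le_gap_bound[OF assms(2)] assms(1,3) by (auto simp: active_def excess_event_def not_less)
  have "active t \<omega>" if "t \<in> {1..T}" for t
    using bounded that by (auto simp: active_def)
  from sum_grad_sq_le[OF assms(2) this] assms(1,4)
  have "(\<Sum>t=1..T. (norm (grad t \<omega>))\<^sup>2) \<le> real T * rate"
    using rate_bound by (auto simp: excess_event_def not_less)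
  then show "1 / real T * (\<Sum>t=1..T. (norm (grad t \<omega>))\<^sup>2) \<le> rate"
    using T_pos by (simp add: field_simps)
qed

lemma prob_good_event:
  "1 - 2 * \<delta> \<le> prob {\<omega> \<in> space M. 1 / real T * (\<Sum>t=1..T. (norm (grad t \<omega>))\<^sup>2) \<le> rate
     \<and> active (Suc T) \<omega>}" (is "_ \<le> prob ?good")
proof -
  let ?bad = "early_excess \<union> final_excess \<union> {\<omega> \<in> space M. \<not> noise_ok \<omega>}"
  have bad_sets: "early_excess \<in> events" "final_excess \<in> events" "{\<omega> \<in> space M. \<not> noise_ok \<omega>} \<in> events"
    using excess_event_sets by auto
  have "prob ?bad \<le> prob early_excess + prob final_excess + prob {\<omega> \<in> space M. \<not> noise_ok \<omega>}"
    using bad_sets by (meson measure_Un_le sets.Un add_right_mono order_trans)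
  then have "prob ?bad \<le> 2 * \<delta>"
    using prob_early_excess_le prob_final_excess_le prob_not_noise_ok by linarith
  moreover have "prob (space M - ?bad) \<le> prob ?good"
  proof (rule finite_measure_mono)
    show "space M - ?bad \<subseteq> ?good"
      using good_outside_excess_events by auto
    have [measurable]: "(\<lambda>\<omega>. \<Sum>t=1..T. (norm (grad t \<omega>))\<^sup>2) \<in> borel_measurable M"
      by (intro borel_measurable_sum borel_measurable_power borel_measurable_norm grad_measurable) auto
    show "?good \<in> events"
      by measurable
  qed
  ultimately show ?thesis
    using prob_compl[of ?bad] bad_sets by auto
qed

end

theorem theorem5:
  fixes M :: "'m measure"
    and f :: "'a::euclidean_space \<Rightarrow> real" and f' :: "'a \<Rightarrow> 'a"
    and fstar \<beta> \<alpha> \<delta> \<sigma>0 \<sigma>1 :: real and T :: nat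
    and w1 :: 'a and w g :: "nat \<Rightarrow> 'm \<Rightarrow> 'a"
  assumes "prob_space M"
    and grad: "\<And>x. (f has_derivative (\<lambda>h. f' x \<bullet> h)) (at x)"
    and "\<beta> > 0"
    and smooth: "\<And>x y. norm (f' x - f' y) \<le> \<beta> * norm (x - y)"
    and min_attained: "\<exists>x. f x = fstar" and min_le: "\<And>x. fstar \<le> f x"
    and "\<alpha> > 0" and "0 < \<delta>" and "\<delta> < 1/2" and "T \<ge> 1"
    and "\<sigma>0 \<ge> 0" and "\<sigma>1 \<ge> 0"
    and init: "\<And>\<omega>. w 1 \<omega> = w1"
    and step: "\<And>t \<omega>. t \<ge> 1 \<Longrightarrow>
                 w (Suc t) \<omega> = w t \<omega> - sgd_eta \<beta> \<sigma>0 \<sigma>1 \<alpha> \<delta> T *\<^sub>R g t \<omega>"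
    and meas: "\<And>t. g t \<in> borel_measurable M"
    and unbiased: "\<And>t b. 1 \<le> t \<Longrightarrow> t \<le> T \<Longrightarrow> b \<in> Basis \<Longrightarrow>
        AE \<omega> in M. real_cond_exp M (hist_alg M g t) (\<lambda>\<omega>. g t \<omega> \<bullet> b) \<omega> = f' (w t \<omega>) \<bullet> b"
    and noise: "\<And>t. 1 \<le> t \<Longrightarrow> t \<le> T \<Longrightarrow>
        AE \<omega> in M. (norm (g t \<omega> - f' (w t \<omega>)))\<^sup>2 \<le> \<sigma>0\<^sup>2 + \<sigma>1\<^sup>2 * (norm (f' (w t \<omega>)))\<^sup>2"
  shows "measure M {\<omega> \<in> space M.
           (1 / real T) * (\<Sum>t=1..T. (norm (f' (w t \<omega>)))\<^sup>2)
             \<le> (\<beta> * \<alpha> + (f w1 - fstar) / \<alpha>) * (2 * \<sigma>0 / sqrt (real T))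
               + (8 * \<beta> * (f w1 - fstar) * (1 + 4 * \<sigma>1\<^sup>2) * log 2 (real T / \<delta>)
                  + 24 * \<sigma>1\<^sup>2 * \<beta>\<^sup>2 * \<alpha>\<^sup>2 * log 2 (1 / \<delta>)
                  + 15 * \<sigma>0\<^sup>2 * log 2 (1 / \<delta>)) * (1 / real T)
           \<and> (\<forall>t\<in>{1..T+1}. f (w t \<omega>) - fstar
                \<le> 2 * (f w1 - fstar) + 2 * \<beta> * \<alpha>\<^sup>2
                  + 3 * min (\<sigma>0\<^sup>2 / (4 * \<beta> * (1 + \<sigma>1\<^sup>2 * log 2 (real T / \<delta>))))
                            (\<sigma>0 * \<alpha> / sqrt (real T)) * log 2 (real T / \<delta>))}
         \<ge> 1 - 2 * \<delta>"
proof -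
  interpret sgd_setting M f f' fstar \<beta> \<alpha> \<delta> \<sigma>0 \<sigma>1 T w1 w g
    by (rule sgd_setting.intro[OF assms(1-4,6-17)])
  from prob_good_event show ?thesis
    unfolding rate_def grad_def active_def gap_def gap_bound_def noise_scale_def \<eta>1_inv_def \<Delta>1_def
      log_T_def log_\<delta>_def Suc_eq_plus1 .
qed

end
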